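(* Let $(F_n)_{n\ge0}$ be the Fibonacci sequence ($F_0=0$, $F_1=1$, $F_{n+2}=F_{n+1}+F_n$) and $\Phi=(1+\sqrt5)/2$. For every fixed positive integer $m$, \[\log\mathrm{lcm}(F_n,F_{n+1},\dots,F_{n+m})\sim n(m+1)\log\Phi\quad\text{as } n\to+\infty.\] *)

theory Defs
  imports "HOL-Analysis.Analysis" "HOL-Number_Theory.Fib" "HOL-Library.Landau_Symbols"
begin

definition golden_ratio :: real where
  "golden_ratio = (1 + sqrt 5) / 2"

end

theory Submission
  imports Defs "HOL-Computational_Algebra.Factorial_Ring"
begin

(* Both ln (F_n \<cdot> ... \<cdot> F_(n+m)) and ln lcm(F_n, ..., F_(n+m)) equal n (m+1) ln \<Phi> + O(1).
   For the product this follows from \<Phi>^(i-2) \<le> F_i \<le> \<Phi>^(i-1). The lcm divides the product,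
   and conversely the product divides C_m \<cdot> lcm with C_m independent of n: adjoining F_(n+k+1)
   multiplies the lcm by F_(n+k+1) / gcd(F_(n+k+1), lcm), and this gcd divides F_1 \<cdot> ... \<cdot> F_(k+1)
   because gcd(F_j, F_i) = F_gcd(j,i) divides F_(j-i). *)

lemma golden_ratio_gt_1: "golden_ratio > 1"
  by (simp add: golden_ratio_def)

lemma golden_ratio_power_Suc_Suc:
  "golden_ratio ^ Suc (Suc n) = golden_ratio ^ Suc n + golden_ratio ^ n"
proof -
  have "golden_ratio\<^sup>2 = golden_ratio + 1"
    by (simp add: golden_ratio_def power2_eq_square field_simps)
  then have "golden_ratio ^ n * golden_ratio\<^sup>2 = golden_ratio ^ n * (golden_ratio + 1)"
    by simp
  then show ?thesis
    by (simp add: algebra_simps power2_eq_square)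
qed

lemma fib_Suc_le_golden_ratio_power: "real (fib (Suc n)) \<le> golden_ratio ^ n"
proof (induction n rule: fib.induct)
  case 2
  show ?case using golden_ratio_gt_1 by simp
next
  case (3 n)
  have "real (fib (Suc (Suc (Suc n)))) = real (fib (Suc (Suc n))) + real (fib (Suc n))"
    by (metis fib.simps(3) of_nat_add)
  with 3 show ?case
    unfolding golden_ratio_power_Suc_Suc by linarith
qed simp

lemma golden_ratio_power_le_fib: "golden_ratio ^ n \<le> real (fib (Suc (Suc n)))"
proof (induction n rule: fib.induct)
  case 2
  have "sqrt 5 \<le> 3" by (rule real_le_lsqrt) auto
  then show ?case by (simp add: golden_ratio_def numeral_eq_Suc)
next
  case (3 n)
  have "real (fib (Suc (Suc (Suc (Suc n))))) = real (fib (Suc (Suc (Suc n)))) + real (fib (Suc (Suc n)))"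
    by (metis fib.simps(3) of_nat_add)
  with 3 show ?case
    unfolding golden_ratio_power_Suc_Suc by linarith
qed simp

lemma ln_fib_approx:
  assumes "i > 0"
  shows "\<bar>ln (real (fib i)) - real i * ln golden_ratio\<bar> \<le> 2 * ln golden_ratio"
proof -
  have pos: "real (fib i) > 0" using assms by (simp add: fib_neq_0_nat)
  have "ln (real (fib i)) \<le> ln (golden_ratio ^ (i - 1))"
    using fib_Suc_le_golden_ratio_power[of "i - 1"] assms pos by simp
  moreover have "ln (golden_ratio ^ (i - 2)) \<le> ln (real (fib i))" if "i \<ge> 2"
    using golden_ratio_power_le_fib[of "i - 2"] that pos golden_ratio_gt_1
    by (simp add: numeral_2_eq_2 Suc_diff_Suc)
  ultimately show ?thesis
    using assms golden_ratio_gt_1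
    by (cases "i = 1") (auto simp: ln_realpow of_nat_diff algebra_simps)
qed

lemma gcd_Lcm_distrib:
  fixes x :: "'a :: factorial_semiring_gcd"
  assumes "finite A"
  shows "gcd x (Lcm A) = Lcm (gcd x ` A)"
  using assms by (induction A rule: finite_induct) (simp_all add: gcd_lcm_distrib)

lemma fib_dvd_fib:
  assumes "d dvd m"
  shows "fib d dvd fib m"
proof -
  have "fib d = gcd (fib d) (fib m)"
    using assms by (simp add: fib_gcd[symmetric] gcd_nat.absorb1)
  then show ?thesis
    by (metis gcd_dvd2)
qed

lemma gcd_fib_dvd_prod_fib:
  assumes "i < j" "j - i \<le> k"
  shows "gcd (fib j) (fib i) dvd (\<Prod>d\<in>{1..k}. fib d)"
proof -
  have "gcd j i dvd j - i"
    by (simp add: dvd_diff_nat)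
  then have "gcd (fib j) (fib i) dvd fib (j - i)"
    unfolding fib_gcd[symmetric] by (rule fib_dvd_fib)
  also have "fib (j - i) dvd (\<Prod>d\<in>{1..k}. fib d)"
    using assms by (intro dvd_prodI) auto
  finally show ?thesis .
qed

lemma prod_fib_dvd_Lcm_fib:
  "(\<Prod>i\<in>{n..n+k}. fib i) dvd (\<Prod>j\<in>{1..k}. \<Prod>d\<in>{1..j}. fib d) * Lcm (fib ` {n..n+k})"
proof (induction k)
  case (Suc k)
  define a where "a = fib (n + Suc k)"
  define L where "L = Lcm (fib ` {n..n+k})"
  define P where "P = (\<Prod>d\<in>{1..Suc k}. fib d)"
  define C where "C = (\<Prod>j\<in>{1..k}. \<Prod>d\<in>{1..j}. fib d)"
  have range: "{n..n + Suc k} = insert (n + Suc k) {n..n+k}"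
    by auto
  have "gcd a L = Lcm (gcd a ` fib ` {n..n+k})"
    unfolding L_def by (simp add: gcd_Lcm_distrib)
  also have "\<dots> dvd P"
  proof (rule Lcm_least)
    fix b assume "b \<in> gcd a ` fib ` {n..n+k}"
    then obtain i where "i \<in> {n..n+k}" "b = gcd (fib (n + Suc k)) (fib i)"
      unfolding a_def by auto
    then show "b dvd P"
      unfolding P_def using gcd_fib_dvd_prod_fib[of i "n + Suc k" "Suc k"] by auto
  qed
  finally have gcd_dvd: "gcd a L dvd P" .
  have "(\<Prod>i\<in>{n..n + Suc k}. fib i) = a * (\<Prod>i\<in>{n..n+k}. fib i)"
    unfolding range a_def by simp
  also have "\<dots> dvd a * (C * L)"
    using Suc.IH unfolding C_def L_def by simp
  also have "a * (C * L) = C * (gcd a L * lcm a L)"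
    by (simp add: mult_ac)
  also have "\<dots> dvd C * (P * lcm a L)"
    using gcd_dvd by (intro mult_dvd_mono) auto
  also have "\<dots> = (\<Prod>j\<in>{1..Suc k}. \<Prod>d\<in>{1..j}. fib d) * Lcm (fib ` {n..n + Suc k})"
    unfolding C_def P_def a_def L_def range by (simp add: mult_ac)
  finally show ?case .
qed simp

lemma ln_prod_fib_approx:
  assumes "n > 0"
  shows "\<bar>ln (real (\<Prod>i\<in>{n..n+m}. fib i)) - real n * real (m + 1) * ln golden_ratio\<bar>
           \<le> real (m + 1) * real (m + 2) * ln golden_ratio"
proof -
  define c where "c = ln golden_ratio"
  have term_bound: "\<bar>ln (real (fib i)) - real n * c\<bar> \<le> real (m + 2) * c"
    if "i \<in> {n..n+m}" for i
  proof -
    have "\<bar>ln (real (fib i)) - real i * c\<bar> \<le> 2 * c"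
      using ln_fib_approx[of i] that assms unfolding c_def by simp
    moreover have "0 \<le> (real i - real n) * c" "(real i - real n) * c \<le> real m * c"
      using that golden_ratio_gt_1 unfolding c_def by (auto intro: mult_right_mono)
    ultimately show ?thesis
      by (simp add: algebra_simps abs_le_iff)
  qed
  have "ln (real (\<Prod>i\<in>{n..n+m}. fib i)) - real n * real (m + 1) * c
          = (\<Sum>i\<in>{n..n+m}. ln (real (fib i)) - real n * c)"
    using assms by (subst of_nat_prod, subst ln_prod) (auto simp: fib_neq_0_nat sum_subtractf)
  also have "\<bar>\<dots>\<bar> \<le> (\<Sum>i\<in>{n..n+m}. real (m + 2) * c)"
    by (rule order_trans[OF sum_abs sum_mono]) (rule term_bound)
  finally show ?thesis
    unfolding c_def by simp
qed

lemma ln_Lcm_fib_bounds: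
  fixes n m :: nat
  assumes "n > 0"
  defines "P \<equiv> \<Prod>i\<in>{n..n+m}. fib i"
    and "L \<equiv> Lcm (fib ` {n..n+m})"
    and "C \<equiv> \<Prod>j\<in>{1..m}. \<Prod>d\<in>{1..j}. fib d"
  shows "ln (real L) \<le> ln (real P)" "ln (real P) \<le> ln (real C) + ln (real L)"
proof -
  have "P > 0" "C > 0"
    using assms(1) unfolding P_def C_def by (auto intro!: prod_pos fib_neq_0_nat)
  moreover have "L dvd P"
    unfolding L_def P_def by (rule Lcm_least) (auto intro: dvd_prodI)
  moreover have "P dvd C * L"
    unfolding P_def C_def L_def by (rule prod_fib_dvd_Lcm_fib)
  ultimately have "L > 0" "L \<le> P" "P \<le> C * L"
    by (auto intro!: dvd_imp_le Nat.gr0I)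
  moreover have "ln (real C) + ln (real L) = ln (real (C * L))"
    using \<open>C > 0\<close> \<open>L > 0\<close> by (simp add: ln_mult)
  ultimately show "ln (real L) \<le> ln (real P)" "ln (real P) \<le> ln (real C) + ln (real L)"
    using \<open>P > 0\<close> by (simp_all only: ln_le_cancel_iff of_nat_0_less_iff of_nat_le_iff mult_pos_pos)
qed

lemma asymp_equiv_if_bounded_diff:
  fixes f g :: "'a \<Rightarrow> real"
  assumes "filterlim g at_top F" "eventually (\<lambda>x. \<bar>f x - g x\<bar> \<le> K) F"
  shows "f \<sim>[F] g"
proof (rule smallo_imp_asymp_equiv)
  have "(\<lambda>x. f x - g x) \<in> O[F](\<lambda>_. 1)"
    using assms(2) by (intro bigoI[of _ K]) simp
  moreover have "(\<lambda>_. 1) \<in> o[F](g)"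
    using assms(1) by (simp flip: smallomega_iff_smallo add: smallomega_1_conv_filterlim
        filterlim_at_top_imp_at_infinity)
  ultimately show "(\<lambda>x. f x - g x) \<in> o[F](g)"
    by (rule landau_o.big_small_trans)
qed

theorem corollary3:
  fixes m :: nat
  assumes "m > 0"
  shows "(\<lambda>n. ln (real (Lcm (fib ` {n..n+m}))))
           \<sim>[at_top] (\<lambda>n. real n * real (m + 1) * ln golden_ratio)"
proof (rule asymp_equiv_if_bounded_diff)
  define C where "C = (\<Prod>j\<in>{1..m}. \<Prod>d\<in>{1..j}. fib d)"
  show "eventually (\<lambda>n. \<bar>ln (real (Lcm (fib ` {n..n+m}))) - real n * real (m + 1) * ln golden_ratio\<bar>
          \<le> ln (real C) + real (m + 1) * real (m + 2) * ln golden_ratio) at_top"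
    using eventually_gt_at_top[of 0]
  proof eventually_elim
    case (elim n)
    show ?case
      using ln_Lcm_fib_bounds[OF elim, of m] ln_prod_fib_approx[OF elim, of m]
      unfolding C_def by (simp add: abs_le_iff)
  qed
  have "filterlim (\<lambda>n. real n * (real (m + 1) * ln golden_ratio)) at_top at_top"
    using golden_ratio_gt_1
    by (intro filterlim_at_top_mult_tendsto_pos[OF tendsto_const] filterlim_real_sequentially) auto
  then show "filterlim (\<lambda>n. real n * real (m + 1) * ln golden_ratio) at_top at_top"
    by (simp add: mult.assoc)
qed

end
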